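(* Let two algebraically equivalent models (each one of the linear dynamic models described in the context) be written in stacked form as $$T_1x=v,\qquad T_2y=w,$$ where $x,y$ are zero-mean nonsingular Gaussian sequences over $[0,N]$, the nonsingular matrices $T_1,T_2$ are determined by the model parameters, and $v=[v_0',\ldots,v_N']'$, $w=[w_0',\ldots,w_N']'$ are the vectors of dynamic noise and boundary values with nonsingular covariances $\mathrm{Cov}(v)=P_1$, $\mathrm{Cov}(w)=P_2$. Then the sample paths of $v$ and $w$ are related by $$T_2'P_2^{-1}w=T_1'P_1^{-1}v .$$
   Context: Sequences are indexed by $[0,N]=(0,1,\ldots,N)$, $x_k\in\mathbb{R}^d$, $'$ denotes transpose. The models considered are linear dynamic models of the following types: forward/backward Markov, reciprocal, and forward/backward $CM_L$ and $CM_F$ models; each such model with its boundary condition can be written as $Tx=v$ with $T$ nonsingular and $v$ stacking the zero-mean Gaussian dynamic noise and boundary values. Two models $T_1x=v$, $T_2y=w$ are algebraically equivalent (AE) if $x=y$ (path-wise identical sequences). *)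

theory Defs
  imports "HOL-Probability.Probability"
begin

text \<open>Stacked sequences over [0,N] with values in R^d are represented as vectors
  of type real^'n, where the finite index type 'n stands for the (N+1)d stacked
  coordinates.\<close>

text \<open>Zero-mean nonsingular Gaussian random vector: a random vector every nonzero
  linear functional of which is normally distributed with mean 0 and positive
  standard deviation (Cramer--Wold characterisation).\<close>
definition zm_nonsing_gaussian :: "'a measure \<Rightarrow> ('a \<Rightarrow> real^'n::finite) \<Rightarrow> bool" where
  "zm_nonsing_gaussian M x \<longleftrightarrow>
     x \<in> borel_measurable M \<and>
     (\<forall>c::real^'n. c \<noteq> 0 \<longrightarrow>
        (\<exists>\<sigma>>0. distributed M lborel (\<lambda>\<omega>. c \<bullet> x \<omega>) (normal_density 0 \<sigma>)))"

definition cov_mat :: "'a measure \<Rightarrow> ('a \<Rightarrow> real^'n::finite) \<Rightarrow> real^'n^'n" where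
  "cov_mat M x = (\<chi> i j. integral\<^sup>L M (\<lambda>\<omega>.
      (x \<omega> $ i - integral\<^sup>L M (\<lambda>\<eta>. x \<eta> $ i)) *
      (x \<omega> $ j - integral\<^sup>L M (\<lambda>\<eta>. x \<eta> $ j))))"

end

theory Submission
  imports Defs
begin

text \<open>Writing \<open>v = T x\<close> with \<open>x\<close> zero-mean, the covariance of \<open>v\<close> is the congruence
  \<open>P = T C T'\<close> of the second-moment matrix \<open>C\<close> of \<open>x\<close>, so \<open>T' P\<^sup>-\<^sup>1 T = C\<^sup>-\<^sup>1\<close> and
  \<open>T' P\<^sup>-\<^sup>1 v = C\<^sup>-\<^sup>1 x\<close>. This quantity depends only on the path of \<open>x\<close>, which two
  algebraically equivalent models share. Gaussianity is only needed to guarantee finite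
  second moments and zero means.\<close>

lemma matrix_inv_unique:
  fixes A B :: "'a::field^'n^'n"
  assumes "A ** B = mat 1"
  shows "matrix_inv A = B"
proof -
  have "invertible A"
    using assms matrix_left_right_inverse unfolding invertible_def by blast
  then have "matrix_inv A ** A = mat 1"
    unfolding invertible_def matrix_inv_def by (rule someI_ex[THEN conjunct2])
  have "matrix_inv A = matrix_inv A ** (A ** B)"
    by (simp add: assms matrix_mul_rid)
  also have "\<dots> = (matrix_inv A ** A) ** B"
    by (simp add: matrix_mul_assoc)
  also have "\<dots> = B"
    by (simp add: \<open>matrix_inv A ** A = mat 1\<close> matrix_mul_lid)
  finally show ?thesis .
qed

lemma matrix_mul_matrix_inv:
  fixes A :: "'a::field^'n^'n"
  assumes "invertible A"
  shows "A ** matrix_inv A = mat 1"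
  using assms unfolding invertible_def matrix_inv_def by (rule someI_ex[THEN conjunct1])

lemma transpose_mult_matrix_inv_congruence:
  fixes T C :: "'a::field^'n^'n"
  assumes T: "invertible T" and P: "invertible (T ** C ** transpose T)"
  shows "transpose T ** matrix_inv (T ** C ** transpose T) ** T = matrix_inv C"
proof -
  let ?P = "T ** C ** transpose T"
  obtain S where S: "S ** T = mat 1"
    using T invertible_left_inverse by blast
  have "C ** (transpose T ** matrix_inv ?P ** T) = (S ** T) ** C ** (transpose T ** matrix_inv ?P ** T)"
    by (simp add: S matrix_mul_lid)
  also have "\<dots> = S ** (?P ** matrix_inv ?P) ** T"
    by (simp add: matrix_mul_assoc)
  also have "\<dots> = mat 1"
    by (simp add: matrix_mul_matrix_inv[OF P] matrix_mul_rid S)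
  finally show ?thesis
    by (rule matrix_inv_unique[symmetric])
qed

definition second_moment_mat :: "'a measure \<Rightarrow> ('a \<Rightarrow> real^'n::finite) \<Rightarrow> real^'n^'n" where
  "second_moment_mat M x = (\<chi> i j. integral\<^sup>L M (\<lambda>\<omega>. x \<omega> $ i * x \<omega> $ j))"

lemma second_moment_mat_cong:
  "(\<And>\<omega>. \<omega> \<in> space M \<Longrightarrow> x \<omega> = y \<omega>) \<Longrightarrow> second_moment_mat M x = second_moment_mat M y"
  unfolding second_moment_mat_def by (simp cong: Bochner_Integration.integral_cong)

lemma cov_mat_cong:
  "(\<And>\<omega>. \<omega> \<in> space M \<Longrightarrow> x \<omega> = y \<omega>) \<Longrightarrow> cov_mat M x = cov_mat M y"
  unfolding cov_mat_def by (simp cong: Bochner_Integration.integral_cong)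

lemma cov_mat_eq_second_moment_mat:
  assumes "\<And>i. integral\<^sup>L M (\<lambda>\<omega>. x \<omega> $ i) = 0"
  shows "cov_mat M x = second_moment_mat M x"
  unfolding cov_mat_def second_moment_mat_def by (simp add: assms)

lemma second_moment_mat_matrix_vector_mult:
  fixes x :: "'a \<Rightarrow> real^'n::finite" and A :: "real^'n^'m::finite"
  assumes "\<And>k l. integrable M (\<lambda>\<omega>. x \<omega> $ k * x \<omega> $ l)"
  shows "second_moment_mat M (\<lambda>\<omega>. A *v x \<omega>) = A ** second_moment_mat M x ** transpose A"
proof -
  have "second_moment_mat M (\<lambda>\<omega>. A *v x \<omega>) $ i $ j
      = (A ** second_moment_mat M x ** transpose A) $ i $ j" for i j
  proof -
    have "(A *v x \<omega>) $ i * (A *v x \<omega>) $ j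
        = (\<Sum>k\<in>UNIV. \<Sum>l\<in>UNIV. A $ i $ k * A $ j $ l * (x \<omega> $ k * x \<omega> $ l))" for \<omega>
      by (simp add: matrix_vector_mult_def sum_product mult_ac)
    then have "second_moment_mat M (\<lambda>\<omega>. A *v x \<omega>) $ i $ j
        = (\<Sum>k\<in>UNIV. \<Sum>l\<in>UNIV. A $ i $ k * A $ j $ l * integral\<^sup>L M (\<lambda>\<omega>. x \<omega> $ k * x \<omega> $ l))"
      using assms by (simp add: second_moment_mat_def)
    also have "\<dots> = (A ** second_moment_mat M x ** transpose A) $ i $ j"
        unfolding second_moment_mat_def matrix_matrix_mult_def transpose_def
      by (subst sum.swap) (simp add: sum_distrib_left sum_distrib_right mult_ac)
    finally show ?thesis .
  qed
  then show ?thesis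
    by (simp add: vec_eq_iff)
qed

lemma zm_nonsing_gaussian_inner:
  assumes M: "prob_space M" and x: "zm_nonsing_gaussian M x"
  shows "integrable M (\<lambda>\<omega>. (c \<bullet> x \<omega>)\<^sup>2)"
    and "integrable M (\<lambda>\<omega>. c \<bullet> x \<omega>)"
    and "integral\<^sup>L M (\<lambda>\<omega>. c \<bullet> x \<omega>) = 0"
proof -
  have "integrable M (\<lambda>\<omega>. (c \<bullet> x \<omega>) ^ k) \<and> integral\<^sup>L M (\<lambda>\<omega>. c \<bullet> x \<omega>) = 0"
    if "k > 0" for k
  proof (cases "c = 0")
    case True
    then show ?thesis
      using M \<open>k > 0\<close> by (simp add: power_0_left)
  next
    case False
    then obtain \<sigma> where "\<sigma> > 0" and D: "distributed M lborel (\<lambda>\<omega>. c \<bullet> x \<omega>) (normal_density 0 \<sigma>)"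
      using x unfolding zm_nonsing_gaussian_def by blast
    then have "integrable lborel (\<lambda>t. normal_density 0 \<sigma> t * t ^ k)"
      using integrable_normal_moment[of \<sigma> 0 k] by simp
    then show ?thesis
      using distributed_integrable[OF D, of "\<lambda>t. t ^ k"]
        prob_space.normal_distributed_expectation[OF M \<open>\<sigma> > 0\<close> D] by simp
  qed
  from this[of 2] this[of 1] show "integrable M (\<lambda>\<omega>. (c \<bullet> x \<omega>)\<^sup>2)"
    and "integrable M (\<lambda>\<omega>. c \<bullet> x \<omega>)" and "integral\<^sup>L M (\<lambda>\<omega>. c \<bullet> x \<omega>) = 0"
    by simp_all
qed

lemma zm_nonsing_gaussian_integrable_component_mult:
  fixes x :: "'a \<Rightarrow> real^'n::finite"
  assumes "prob_space M" and "zm_nonsing_gaussian M x"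
  shows "integrable M (\<lambda>\<omega>. x \<omega> $ k * x \<omega> $ l)"
proof -
  let ?a = "axis k 1 :: real^'n" and ?b = "axis l 1 :: real^'n"
  have polarization: "x \<omega> $ k * x \<omega> $ l
      = (((?a + ?b) \<bullet> x \<omega>)\<^sup>2 - (?a \<bullet> x \<omega>)\<^sup>2 - (?b \<bullet> x \<omega>)\<^sup>2) / 2" for \<omega>
    by (simp add: inner_add_left inner_axis' power2_eq_square algebra_simps)
  show ?thesis
    unfolding polarization using zm_nonsing_gaussian_inner(1)[OF assms] by simp
qed

lemma cov_mat_linear_image_zm_nonsing_gaussian:
  fixes x :: "'a \<Rightarrow> real^'n::finite" and v :: "'a \<Rightarrow> real^'m::finite"
    and A :: "real^'n^'m"
  assumes M: "prob_space M" and x: "zm_nonsing_gaussian M x"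
    and v: "\<forall>\<omega>\<in>space M. A *v x \<omega> = v \<omega>"
  shows "cov_mat M v = A ** second_moment_mat M x ** transpose A"
proof -
  have "cov_mat M v = cov_mat M (\<lambda>\<omega>. A *v x \<omega>)"
    using v by (intro cov_mat_cong) simp
  also have "\<dots> = second_moment_mat M (\<lambda>\<omega>. A *v x \<omega>)"
    using zm_nonsing_gaussian_inner(3)[OF M x]
    by (intro cov_mat_eq_second_moment_mat) (simp add: matrix_vector_mul_component)
  also have "\<dots> = A ** second_moment_mat M x ** transpose A"
    using zm_nonsing_gaussian_integrable_component_mult[OF M x]
    by (rule second_moment_mat_matrix_vector_mult)
  finally show ?thesis .
qed

theorem proposition3:
  fixes M :: "'a measure"
    and x y v w :: "'a \<Rightarrow> real^'n::finite"
    and T1 T2 P1 P2 :: "real^'n^'n"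
  assumes "prob_space M"
    and "zm_nonsing_gaussian M x" and "zm_nonsing_gaussian M y"
    and "invertible T1" and "invertible T2"
    and "\<forall>\<omega>\<in>space M. T1 *v x \<omega> = v \<omega>"
    and "\<forall>\<omega>\<in>space M. T2 *v y \<omega> = w \<omega>"
    and "cov_mat M v = P1" and "cov_mat M w = P2"
    and "invertible P1" and "invertible P2"
    and "\<forall>\<omega>\<in>space M. x \<omega> = y \<omega>"
  shows "\<forall>\<omega>\<in>space M.
           (transpose T2 ** matrix_inv P2) *v w \<omega> = (transpose T1 ** matrix_inv P1) *v v \<omega>"
proof
  fix \<omega> assume \<omega>: "\<omega> \<in> space M"
  define C where "C = second_moment_mat M x"
  have "second_moment_mat M y = C"
    unfolding C_def using assms(12) by (intro second_moment_mat_cong) simp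
  then have P1: "P1 = T1 ** C ** transpose T1" and P2: "P2 = T2 ** C ** transpose T2"
    using cov_mat_linear_image_zm_nonsing_gaussian[OF assms(1,2,6)]
      cov_mat_linear_image_zm_nonsing_gaussian[OF assms(1,3,7)] assms(8,9)
    unfolding C_def by simp_all
  have "(transpose T2 ** matrix_inv P2) *v w \<omega> = (transpose T2 ** matrix_inv P2 ** T2) *v x \<omega>"
    using assms(7,12) \<omega> by (simp add: matrix_vector_mul_assoc[symmetric])
  also have "\<dots> = matrix_inv C *v x \<omega>"
    using transpose_mult_matrix_inv_congruence[OF assms(5)] assms(11) P2 by simp
  also have "\<dots> = (transpose T1 ** matrix_inv P1 ** T1) *v x \<omega>"
    using transpose_mult_matrix_inv_congruence[OF assms(4)] assms(10) P1 by simp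
  also have "\<dots> = (transpose T1 ** matrix_inv P1) *v v \<omega>"
    using assms(6) \<omega> by (simp add: matrix_vector_mul_assoc[symmetric])
  finally show "(transpose T2 ** matrix_inv P2) *v w \<omega> = (transpose T1 ** matrix_inv P1) *v v \<omega>" .
qed

end
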